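(* For every real $p\geq 0$ and every integer $n\geq 2$, $$\sum_{k=1}^{n-1}\frac{B_{2k}B_{2n-2k}}{(2k)(2n-2k)}\,\frac{\Gamma(2k+p)\Gamma(2n-2k+p)}{\Gamma(2k)\Gamma(2n-2k)}=2\Gamma(p+1)\sum_{k=1}^{n}\frac{B_{2k}B_{2n-2k}}{(2k)!\,(2n-2k)!}\,\frac{\Gamma(2k+p)\Gamma(2n+2p)}{\Gamma(2p+2k+1)}+2\,\frac{B_{2n}\Gamma(2n+2p)}{(2n)!}\sum_{k=1}^{2n-1}\beta(p+k,p+1).$$
   Context: $B_n$ denotes the Bernoulli numbers, defined by $\frac{x}{e^x-1}=\sum_{n\ge 0}B_n\frac{x^n}{n!}$ (so $B_0=1$). $\Gamma$ is the Gamma function and $\beta(a,b)=\frac{\Gamma(a)\Gamma(b)}{\Gamma(a+b)}$ is the Euler beta function. *)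

theory Defs
  imports "HOL-Analysis.Analysis" "HOL-Computational_Algebra.Formal_Power_Series"
begin

definition bernoulli_num :: "nat \<Rightarrow> real" where
  "bernoulli_num n = fact n * fps_nth (fps_X / (fps_exp 1 - 1)) n"

end

theory Submission
  imports Defs
begin

(* Let E(x) = x/(e^x - 1) + x/2 = (x/2) coth(x/2); it is even and its coefficients are B_m/m!
   for m other than 1. For t + s = 1 the addition formula for coth gives
     E(tx) E(sx) = s E(tx) E(x) + t E(sx) E(x) - t s x^2/4,
   and comparing coefficients of x^(2n) yields a polynomial identity in t and s = 1 - t whose
   coefficients are the products B_2k B_(2n-2k) / ((2k)! (2n-2k)!). Integrating it against
   t^(p-1) (1-t)^(p-1) over [0,1] turns each monomial t^a (1-t)^b into Beta(p+a, p+b); the terms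
   k = 0 and k = n contribute geometric sums, which become the last sum of the theorem. Finally
   Gamma(a+p) Gamma(b+p) = Beta(p+a, p+b) Gamma(a+b+2p) translates everything into Gamma values. *)

lemma sum_even_indices:
  fixes g :: "nat \<Rightarrow> 'a::comm_monoid_add"
  assumes "\<And>i. odd i \<Longrightarrow> g i = 0"
  shows "(\<Sum>i=0..2*n. g i) = (\<Sum>k=0..n. g (2*k))"
proof (induction n)
  case (Suc n)
  have "(\<Sum>i=0..2 * Suc n. g i) = (\<Sum>i=0..2*n. g i) + g (2*n + 1) + g (2*n + 2)"
    by (simp add: add.assoc)
  then show ?case
    using Suc assms[of "2*n + 1"] by simp
qed simp

lemma fps_mult_nth_even:
  fixes f g :: "'a::semiring_0 fps"
  assumes "\<And>i. odd i \<Longrightarrow> fps_nth f i = 0"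
  shows "fps_nth (f * g) (2*n) = (\<Sum>k=0..n. fps_nth f (2*k) * fps_nth g (2*n - 2*k))"
  unfolding fps_mult_nth by (rule sum_even_indices) (simp add: assms)

lemma sum_powers_complementary:
  fixes t s :: "'a::comm_ring_1"
  assumes ts: "t + s = 1"
  shows "(\<Sum>j=1..m. t^j * s + s^j * t) = 1 - t^Suc m - s^Suc m"
proof (induction m)
  case 0
  then show ?case
    using ts by (simp add: algebra_simps)
next
  case (Suc m)
  have t: "1 - s = t" and s: "1 - t = s"
    using ts by (simp_all add: algebra_simps)
  have "(\<Sum>j=1..Suc m. t^j * s + s^j * t)
      = (1 - t^Suc m - s^Suc m) + (t^Suc m * s + s^Suc m * t)"
    using Suc.IH by simp
  also have "\<dots> = 1 - t^Suc m * (1 - s) - s^Suc m * (1 - t)"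
    by (simp add: algebra_simps)
  finally show ?case
    unfolding t s by simp
qed

(* The addition formula coth a coth b = coth (a + b) (coth a + coth b) - 1, multiplied out,
   for A = t h coth a, B = s h coth b, C = h coth (a + b), u = e^(2a), w = e^(2b). *)
lemma coth_addition_cleared:
  fixes A B C u w h t s :: "'a::comm_ring_1"
  assumes A: "A * (u - 1) = t * h * (u + 1)" and B: "B * (w - 1) = s * h * (w + 1)"
    and C: "C * (u * w - 1) = h * (u * w + 1)"
  shows "A * B * ((u - 1) * (w - 1) * (u * w - 1))
       = (s * A * C + t * B * C - t * s * h * h) * ((u - 1) * (w - 1) * (u * w - 1))"
proof -
  have lhs: "A * B * ((u - 1) * (w - 1) * (u * w - 1))
      = (A * (u - 1)) * (B * (w - 1)) * (u * w - 1)"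
    by (simp add: algebra_simps)
  have rhs: "(s * A * C + t * B * C - t * s * h * h) * ((u - 1) * (w - 1) * (u * w - 1))
      = s * (A * (u - 1)) * (C * (u * w - 1)) * (w - 1)
        + t * (B * (w - 1)) * (C * (u * w - 1)) * (u - 1)
        - t * s * h * h * ((u - 1) * (w - 1) * (u * w - 1))"
    by (simp add: algebra_simps)
  show ?thesis
    unfolding lhs rhs A B C by (simp add: algebra_simps)
qed

lemma has_integral_Beta_monomial:
  fixes p :: real
  assumes "p + real a > 0" and "p + real b > 0"
  shows "((\<lambda>t. t^a * (1 - t)^b * (t powr (p - 1) * (1 - t) powr (p - 1)))
           has_integral Beta (p + real a) (p + real b)) {0..1}"
proof -
  have powr_split: "x powr (p + real m - 1) = x^m * x powr (p - 1)"
    if "x \<ge> 0" for x :: real and m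
    using that
    by (cases "x = 0") (simp_all add: powr_realpow [symmetric] algebra_simps flip: powr_add)
  show ?thesis
    using has_integral_Beta_real[OF assms]
    by (rule has_integral_eq[rotated]) (simp add: powr_split mult_ac)
qed

lemma real_mult_Gamma_eq_fact: "n \<ge> 1 \<Longrightarrow> real n * Gamma (real n) = fact n"
  using Gamma_fact[of "n - 1", where 'a = real] by (simp add: fact_reduce of_nat_diff)

lemma Gamma_ratio_eq_Beta:
  fixes p x :: real
  assumes "a \<ge> 1" and "b \<ge> 1" and "p \<ge> 0"
  shows "x / (real a * real b)
         * (Gamma (real a + p) * Gamma (real b + p) / (Gamma (real a) * Gamma (real b)))
       = Gamma (real a + real b + 2*p) * (x / (fact a * fact b) * Beta (p + real a) (p + real b))"
proof -
  have "Gamma (real a + real b + 2*p) > 0" "Gamma (real a) > 0" "Gamma (real b) > 0"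
    using assms by auto
  then show ?thesis
    using real_mult_Gamma_eq_fact[OF assms(1)] real_mult_Gamma_eq_fact[OF assms(2)]
    by (auto simp: Beta_def field_simps)
qed

(* (x/2) coth(x/2): the generating function of bernoulli_num with the term B_1 x = -x/2 removed *)
definition xcoth_fps :: "'a::field_char_0 fps" where
  "xcoth_fps = fps_X / (fps_exp 1 - 1) + fps_const (1/2) * fps_X"

lemma xcoth_fps_times_exp_minus_one:
  "xcoth_fps * (fps_exp 1 - 1)
     = fps_const (1/2) * fps_X * (fps_exp 1 + (1::'a::field_char_0 fps))"
proof -
  have "subdegree (fps_exp (1::'a) - 1) = 1"
    by (rule subdegreeI) (auto simp: less_Suc_eq_0_disj)
  then have "fps_X / (fps_exp 1 - 1) * (fps_exp 1 - 1) = (fps_X :: 'a fps)"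
    by (intro fps_times_divide_eq) auto
  moreover have "(fps_X :: 'a fps) = fps_const (1/2) * fps_X * 2"
    by (simp flip: fps_const_mult fps_numeral_fps_const add: mult_ac)
  ultimately show ?thesis
    unfolding xcoth_fps_def by (simp add: algebra_simps)
qed

lemma xcoth_fps_nth_0: "fps_nth xcoth_fps 0 = (1::'a::field_char_0)"
  using arg_cong[OF xcoth_fps_times_exp_minus_one, of "\<lambda>f. fps_nth f 1"]
  by (simp add: fps_mult_nth_1)

lemma bernoulli_num_eq_xcoth_fps_nth:
  "m \<noteq> 1 \<Longrightarrow> bernoulli_num m = fact m * fps_nth xcoth_fps m"
  by (simp add: bernoulli_num_def xcoth_fps_def)

lemma xcoth_fps_scaled_times_exp_minus_one:
  "(xcoth_fps oo (fps_const c * fps_X)) * (fps_exp c - 1)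
     = fps_const (c/2) * fps_X * (fps_exp c + (1::'a::field_char_0 fps))"
proof -
  have lin0: "fps_nth (fps_const c * fps_X :: 'a fps) 0 = 0"
    by simp
  have "(xcoth_fps * (fps_exp 1 - 1)) oo (fps_const c * fps_X)
      = (fps_const (1/2) * fps_X * (fps_exp 1 + 1)) oo (fps_const c * (fps_X :: 'a fps))"
    by (simp only: xcoth_fps_times_exp_minus_one)
  moreover have "fps_exp 1 oo (fps_const c * fps_X) = (fps_exp c :: 'a fps)"
    by simp
  ultimately show ?thesis
    unfolding fps_compose_mult_distrib[OF lin0] fps_compose_sub_distrib fps_compose_add_distrib
      fps_X_fps_compose_startby0[OF lin0] fps_const_compose fps_compose_1
    by (simp add: mult_ac flip: fps_const_mult)
qed

lemma xcoth_fps_even: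
  "xcoth_fps oo (fps_const (-1) * fps_X) = (xcoth_fps :: 'a::field_char_0 fps)"
proof -
  define F where "F = xcoth_fps oo (fps_const (-1) * fps_X :: 'a fps)"
  define u where "u = fps_exp (1::'a)"
  define v where "v = fps_exp (-1::'a)"
  define h where "h = fps_const (1/2::'a)"
  have uv: "u * v = 1"
    using fps_exp_add_mult[of "1::'a" "-1"] by (simp add: u_def v_def)
  have F: "F * (v - 1) = - h * fps_X * (v + 1)"
    using xcoth_fps_scaled_times_exp_minus_one[of "-1::'a"] by (simp add: F_def v_def h_def)
  have E: "xcoth_fps * (u - 1) = h * fps_X * (u + 1)"
    unfolding u_def h_def by (rule xcoth_fps_times_exp_minus_one)
  have "F * (u - 1) = xcoth_fps * (u - 1)"
    \<comment> \<open>as \<open>u - 1 = - u * (v - 1)\<close>\<close>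
    using uv F E by algebra
  moreover have "u - 1 \<noteq> 0"
    by (simp add: u_def)
  ultimately show ?thesis
    by (simp add: F_def)
qed

lemma xcoth_fps_nth_odd: "odd m \<Longrightarrow> fps_nth xcoth_fps m = (0::'a::field_char_0)"
  using arg_cong[OF xcoth_fps_even, of "\<lambda>f. fps_nth f m"] by simp

lemma xcoth_fps_scaled_product:
  fixes t s :: "'a::field_char_0"
  assumes ts: "t + s = 1" and "t \<noteq> 0" and "s \<noteq> 0"
  shows "(xcoth_fps oo (fps_const t * fps_X)) * (xcoth_fps oo (fps_const s * fps_X))
       = fps_const s * (xcoth_fps oo (fps_const t * fps_X)) * xcoth_fps
         + fps_const t * (xcoth_fps oo (fps_const s * fps_X)) * xcoth_fps
         - fps_const (t * s / 4) * fps_X^2"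
proof -
  define u where "u = fps_exp t"
  define w where "w = fps_exp s"
  define h where "h = fps_const (1/2) * (fps_X :: 'a fps)"
  have uw: "u * w = fps_exp 1"
    using ts by (simp add: u_def w_def flip: fps_exp_add_mult)
  have A: "(xcoth_fps oo (fps_const t * fps_X)) * (u - 1) = fps_const t * h * (u + 1)"
    using xcoth_fps_scaled_times_exp_minus_one[of t]
    by (simp add: u_def h_def mult_ac flip: fps_const_mult)
  have B: "(xcoth_fps oo (fps_const s * fps_X)) * (w - 1) = fps_const s * h * (w + 1)"
    using xcoth_fps_scaled_times_exp_minus_one[of s]
    by (simp add: w_def h_def mult_ac flip: fps_const_mult)
  have C: "xcoth_fps * (u * w - 1) = h * (u * w + 1)"
    unfolding uw h_def by (rule xcoth_fps_times_exp_minus_one)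
  have "u * w - 1 \<noteq> 0"
    unfolding uw by simp
  then have "(u - 1) * (w - 1) * (u * w - 1) \<noteq> 0"
    using assms by (simp add: u_def w_def)
  moreover have "fps_const t * fps_const s * h * h = fps_const (t * s / 4) * fps_X^2"
    by (simp add: h_def power2_eq_square mult_ac flip: fps_const_mult)
  ultimately show ?thesis
    using coth_addition_cleared[OF A B C] by (simp add: mult_ac)
qed

definition xcoth_pair :: "nat \<Rightarrow> nat \<Rightarrow> 'a::field_char_0" where
  "xcoth_pair n k = fps_nth xcoth_fps (2*k) * fps_nth xcoth_fps (2*n - 2*k)"

lemma xcoth_pair_symmetric: "xcoth_pair n n = xcoth_pair n 0"
  by (simp add: xcoth_pair_def mult.commute)

lemma bernoulli_pair_eq_xcoth_pair:
  "bernoulli_num (2*k) * bernoulli_num (2*n-2*k) / (fact (2*k) * fact (2*n-2*k))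
     = xcoth_pair n k"
proof -
  have "2*k \<noteq> 1" and "2*n - 2*k \<noteq> 1"
    by presburger+
  then show ?thesis
    by (simp add: xcoth_pair_def bernoulli_num_eq_xcoth_fps_nth)
qed

lemma xcoth_pair_0: "n \<ge> 1 \<Longrightarrow> xcoth_pair n 0 = bernoulli_num (2*n) / fact (2*n)"
  using bernoulli_num_eq_xcoth_fps_nth[of "2*n"]
  by (simp add: xcoth_pair_def xcoth_fps_nth_0)

lemma xcoth_pair_convolution_identity:
  fixes t s :: "'a::field_char_0"
  assumes "t + s = 1" and "t \<noteq> 0" and "s \<noteq> 0" and "n \<ge> 2"
  shows "(\<Sum>k=0..n. t^(2*k) * s^(2*n-2*k) * xcoth_pair n k)
       = s * (\<Sum>k=0..n. t^(2*k) * xcoth_pair n k)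
         + t * (\<Sum>k=0..n. s^(2*k) * xcoth_pair n k)"
proof -
  have odd_0: "fps_nth (xcoth_fps oo (fps_const c * fps_X)) i = 0"
    if "odd i" for c :: 'a and i
    using that by (simp add: xcoth_fps_nth_odd)
  have nth: "fps_nth ((xcoth_fps oo (fps_const c * fps_X)) * g) (2*n)
      = (\<Sum>k=0..n. c^(2*k) * fps_nth xcoth_fps (2*k) * fps_nth g (2*n - 2*k))"
    for c :: 'a and g :: "'a fps"
    by (simp add: fps_mult_nth_even[OF odd_0])
  \<comment> \<open>the \<open>x\<^sup>2\<close> term does not contribute since \<open>n \<ge> 2\<close>\<close>
  have "fps_nth ((xcoth_fps oo (fps_const t * fps_X)) * (xcoth_fps oo (fps_const s * fps_X))) (2*n)
      = s * fps_nth ((xcoth_fps oo (fps_const t * fps_X)) * xcoth_fps) (2*n)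
        + t * fps_nth ((xcoth_fps oo (fps_const s * fps_X)) * xcoth_fps) (2*n)"
    using assms by (simp add: xcoth_fps_scaled_product mult.assoc fps_X_power_iff)
  then show ?thesis
    unfolding nth fps_nth_compose_linear by (simp add: xcoth_pair_def sum_distrib_left mult_ac)
qed

lemma xcoth_pair_polynomial_identity:
  fixes t s :: "'a::field_char_0"
  assumes ts: "t + s = 1" and "t \<noteq> 0" and "s \<noteq> 0" and n: "n \<ge> 2"
  shows "(\<Sum>k=1..n-1. xcoth_pair n k * (t^(2*k) * s^(2*n-2*k)))
       = (\<Sum>k=1..n. xcoth_pair n k * (t^(2*k) * s + s^(2*k) * t))
         + xcoth_pair n 0 * (\<Sum>j=1..2*n-1. t^j * s + s^j * t)"
proof -
  let ?c = "xcoth_pair n"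
  have split_ends: "(\<Sum>k=0..n. g k) = g 0 + (\<Sum>k=1..n-1. g k) + g n" for g :: "nat \<Rightarrow> 'a"
    using n by (cases n) (simp_all add: sum.atLeast_Suc_atMost sum.cl_ivl_Suc)
  have split_first: "(\<Sum>k=0..n. g k) = g 0 + (\<Sum>k=1..n. g k)" for g :: "nat \<Rightarrow> 'a"
    by (simp add: sum.atLeast_Suc_atMost)
  have geometric: "(\<Sum>j=1..2*n-1. t^j * s + s^j * t) = 1 - t^(2*n) - s^(2*n)"
    using sum_powers_complementary[OF ts, of "2*n-1"] n by simp
  have "(\<Sum>k=1..n-1. ?c k * (t^(2*k) * s^(2*n-2*k)))
      = (\<Sum>k=0..n. t^(2*k) * s^(2*n-2*k) * ?c k) - ?c 0 * (s^(2*n) + t^(2*n))"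
    unfolding split_ends by (simp add: xcoth_pair_symmetric algebra_simps)
  also have "\<dots> = s * (\<Sum>k=1..n. t^(2*k) * ?c k) + t * (\<Sum>k=1..n. s^(2*k) * ?c k)
      + ?c 0 * ((t + s) - t^(2*n) - s^(2*n))"
    unfolding xcoth_pair_convolution_identity[OF assms] split_first by (simp add: algebra_simps)
  also have "\<dots> = (\<Sum>k=1..n. ?c k * (t^(2*k) * s + s^(2*k) * t))
      + ?c 0 * (\<Sum>j=1..2*n-1. t^j * s + s^j * t)"
    unfolding ts geometric by (simp add: sum.distrib sum_distrib_left algebra_simps)
  finally show ?thesis .
qed

lemma xcoth_pair_Beta_identity:
  fixes p :: real
  assumes p: "p \<ge> 0" and n: "n \<ge> 2"
  shows "(\<Sum>k=1..n-1. xcoth_pair n k * Beta (p + real (2*k)) (p + real (2*n-2*k)))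
       = 2 * (\<Sum>k=1..n. xcoth_pair n k * Beta (p + real (2*k)) (p + 1))
         + 2 * xcoth_pair n 0 * (\<Sum>j=1..2*n-1. Beta (p + real j) (p + 1))"
proof -
  let ?c = "xcoth_pair n :: nat \<Rightarrow> real"
  define w where "w t = t powr (p - 1) * (1 - t) powr (p - 1)" for t :: real
  have monomial:
    "((\<lambda>t. t^a * (1 - t)^b * w t) has_integral Beta (p + real a) (p + real b)) {0..1}"
    if "a \<ge> 1" and "b \<ge> 1" for a b
    unfolding w_def using p that by (intro has_integral_Beta_monomial) auto
  have monomial_left:
    "((\<lambda>t. t^a * (1 - t) * w t) has_integral Beta (p + real a) (p + 1)) {0..1}"
    if "a \<ge> 1" for a
    using monomial[of a 1] that by simp
  have monomial_right:
    "((\<lambda>t. t * (1 - t)^b * w t) has_integral Beta (p + 1) (p + real b)) {0..1}"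
    if "b \<ge> 1" for b
    using monomial[of 1 b] that by simp
  define L where "L t = (\<Sum>k=1..n-1. ?c k * (t^(2*k) * (1 - t)^(2*n-2*k) * w t))" for t
  define R where "R t = (\<Sum>k=1..n. ?c k * (t^(2*k) * (1 - t) * w t + t * (1 - t)^(2*k) * w t))
      + ?c 0 * (\<Sum>j=1..2*n-1. t^j * (1 - t) * w t + t * (1 - t)^j * w t)" for t
  have L:
    "(L has_integral (\<Sum>k=1..n-1. ?c k * Beta (p + real (2*k)) (p + real (2*n-2*k)))) {0..1}"
    unfolding L_def by (intro has_integral_sum has_integral_mult_right monomial) auto
  have R: "(R has_integral
        (\<Sum>k=1..n. ?c k * (Beta (p + real (2*k)) (p + 1) + Beta (p + 1) (p + real (2*k))))
        + ?c 0 * (\<Sum>j=1..2*n-1. Beta (p + real j) (p + 1) + Beta (p + 1) (p + real j))) {0..1}"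
    unfolding R_def
    by (intro has_integral_add has_integral_sum has_integral_mult_right
        monomial_left monomial_right) auto
  have "L t = R t" if "t \<in> {0..1} - {0, 1}" for t
  proof -
    have "L t = (\<Sum>k=1..n-1. ?c k * (t^(2*k) * (1 - t)^(2*n-2*k))) * w t"
      by (simp add: L_def sum_distrib_left sum_distrib_right mult_ac)
    also have "\<dots> = ((\<Sum>k=1..n. ?c k * (t^(2*k) * (1 - t) + (1 - t)^(2*k) * t))
        + ?c 0 * (\<Sum>j=1..2*n-1. t^j * (1 - t) + (1 - t)^j * t)) * w t"
      using that n by (subst xcoth_pair_polynomial_identity) auto
    also have "\<dots> = R t"
      by (simp add: R_def sum_distrib_left sum_distrib_right algebra_simps)
    finally show ?thesis .
  qed
  then have
    "(R has_integral (\<Sum>k=1..n-1. ?c k * Beta (p + real (2*k)) (p + real (2*n-2*k)))) {0..1}"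
    using L has_integral_spike_finite_eq[of "{0, 1}" "{0..1}" R L] by auto
  from has_integral_unique[OF this R] show ?thesis
    by (simp add: Beta_commute[of "p + 1"] sum_distrib_left mult_ac)
qed

lemma sum_Gamma_ratio_eq_sum_Beta:
  fixes p :: real
  assumes "p \<ge> 0"
  shows "(\<Sum>k=1..n-1. bernoulli_num (2*k) * bernoulli_num (2*n-2*k)
            / (real (2*k) * real (2*n-2*k))
            * (Gamma (real (2*k) + p) * Gamma (real (2*n-2*k) + p)
               / (Gamma (real (2*k)) * Gamma (real (2*n-2*k)))))
       = Gamma (real (2*n) + 2*p)
         * (\<Sum>k=1..n-1. xcoth_pair n k * Beta (p + real (2*k)) (p + real (2*n-2*k)))"
    (is "sum ?f _ = ?G * sum ?g _")
proof -
  have "?f k = ?G * ?g k" if "k \<in> {1..n-1}" for k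
  proof -
    from that have "real (2*k) + real (2*n-2*k) = real (2*n)" and "2*k \<ge> 1" and "2*n-2*k \<ge> 1"
      by auto
    then show ?thesis
      using Gamma_ratio_eq_Beta[of "2*k" "2*n-2*k" p] assms
      by (simp only: bernoulli_pair_eq_xcoth_pair)
  qed
  then show ?thesis
    by (simp add: sum_distrib_left)
qed

lemma sum_Gamma_quotient_eq_sum_Beta:
  fixes p :: real
  shows "Gamma (p + 1) * (\<Sum>k=1..n. bernoulli_num (2*k) * bernoulli_num (2*n-2*k)
            / (fact (2*k) * fact (2*n-2*k))
            * (Gamma (real (2*k) + p) * Gamma (real (2*n) + 2*p)
               / Gamma (2*p + real (2*k) + 1)))
       = Gamma (real (2*n) + 2*p)
         * (\<Sum>k=1..n. xcoth_pair n k * Beta (p + real (2*k)) (p + 1))"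
  unfolding bernoulli_pair_eq_xcoth_pair sum_distrib_left
  by (intro sum.cong refl) (simp add: Beta_def algebra_simps)

theorem theorem4p1:
  fixes p :: real and n :: nat
  assumes "p \<ge> 0" and "n \<ge> 2"
  shows "(\<Sum>k=1..n-1. bernoulli_num (2*k) * bernoulli_num (2*n-2*k)
            / (real (2*k) * real (2*n-2*k))
            * (Gamma (real (2*k) + p) * Gamma (real (2*n-2*k) + p)
               / (Gamma (real (2*k)) * Gamma (real (2*n-2*k)))))
       = 2 * Gamma (p + 1) * (\<Sum>k=1..n. bernoulli_num (2*k) * bernoulli_num (2*n-2*k)
            / (fact (2*k) * fact (2*n-2*k))
            * (Gamma (real (2*k) + p) * Gamma (real (2*n) + 2*p)
               / Gamma (2*p + real (2*k) + 1)))
         + 2 * (bernoulli_num (2*n) * Gamma (real (2*n) + 2*p) / fact (2*n))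
             * (\<Sum>k=1..2*n-1. Beta (p + real k) (p + 1))"
proof -
  have "n \<ge> 1"
    using assms(2) by simp
  show ?thesis
    unfolding sum_Gamma_ratio_eq_sum_Beta[OF assms(1)] mult.assoc[of 2 "Gamma (p + 1)"]
      sum_Gamma_quotient_eq_sum_Beta xcoth_pair_Beta_identity[OF assms] xcoth_pair_0[OF \<open>n \<ge> 1\<close>]
    by (simp add: algebra_simps)
qed

end
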